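(* Let $\Bbbk$ be a field, let $\mathrm{Var}$ be a variety of $\Bbbk$-algebras with one binary product defined by a set of polylinear identities, and let $\text{tri-}\mathrm{Var}$ be the corresponding replicated variety of tri-algebras. Let $X$ be a set, $\dot X=\{\dot x\mid x\in X\}$ a disjoint copy of $X$, $F=\mathrm{Var}\langle X\cup\dot X\rangle$, $\varphi:F\to F$ the algebra homomorphism with $\varphi(x)=\varphi(\dot x)=x$ ($x\in X$), and $F^{(3)}$ the space $F$ with operations $f\vdash g=\varphi(f)g$, $f\dashv g=f\varphi(g)$, $f\perp g=fg$. Let $V$ be the subalgebra of $F^{(3)}$ generated by $\dot X$. Then $V$ is isomorphic to the free algebra in $\text{tri-}\mathrm{Var}$ generated by $X$; more precisely, for every $A\in\text{tri-}\mathrm{Var}$ and every map $\alpha:X\to A$ there is a unique homomorphism of tri-algebras $\chi:V\to A$ with $\chi(\dot x)=\alpha(x)$ for all $x\in X$.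
   Context: Tri-algebras: linear spaces with three bilinear operations $\dashv$ (=$\mu_{\{1\}}$), $\vdash$ (=$\mu_{\{2\}}$), $\perp$ (=$\mu_{\{1,2\}}$). For a polylinear element $\Phi(x_1,\dots,x_n)$ of the free algebra in one binary operation $\mu$ and nonempty $H\subseteq\{1,\dots,n\}$, $\Phi_H$ is obtained by viewing each monomial as a binary rooted tree with leaves $x_1,\dots,x_n$, marking the leaves $x_i$, $i\in H$, and replacing the label $\mu$ at each node by $\mu_S$, where $S\subseteq\{1,2\}$ is the set of branches (left=1, right=2) containing a marked leaf, or by $\mu_{\{1\}}$ if $S=\varnothing$. The variety $\text{tri-}\mathrm{Var}$ consists of tri-algebras satisfying $(a* b)\vdash c=(a\star b)\vdash c$ and $a\dashv(b* c)=a\dashv(b\star c)$ for all $*,\star\in\{\vdash,\dashv,\perp\}$, and $\Phi_H=0$ for every defining polylinear identity $\Phi$ of $\mathrm{Var}$ of degree $n$ and every nonempty $H\subseteq\{1,\dots,n\}$. *)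

theory Defs
  imports Main HOL.Modules "HOL-Library.Multiset"
begin

datatype 'v mag = Leaf 'v | Node "'v mag" "'v mag"

fun leaves :: "'v mag \<Rightarrow> 'v list" where
  "leaves (Leaf v) = [v]"
| "leaves (Node t1 t2) = leaves t1 @ leaves t2"

fun mag_eval :: "('b \<Rightarrow> 'b \<Rightarrow> 'b) \<Rightarrow> ('v \<Rightarrow> 'b) \<Rightarrow> 'v mag \<Rightarrow> 'b" where
  "mag_eval m a (Leaf v) = a v"
| "mag_eval m a (Node t1 t2) = m (mag_eval m a t1) (mag_eval m a t2)"

text \<open>Evaluation of the monomial with marked leaves H in a tri-algebra with operations
  l = dashv (mu_{1}), r = vdash (mu_{2}), p = perp (mu_{1,2}): the label at a node is
  mu_S where S is the set of branches containing a marked leaf, and mu_{1} if S is empty.\<close>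
fun tri_mag_eval :: "('b \<Rightarrow> 'b \<Rightarrow> 'b) \<Rightarrow> ('b \<Rightarrow> 'b \<Rightarrow> 'b) \<Rightarrow> ('b \<Rightarrow> 'b \<Rightarrow> 'b)
    \<Rightarrow> 'v set \<Rightarrow> ('v \<Rightarrow> 'b) \<Rightarrow> 'v mag \<Rightarrow> 'b" where
  "tri_mag_eval l r p H a (Leaf v) = a v"
| "tri_mag_eval l r p H a (Node t1 t2) =
     (let m1 = (set (leaves t1) \<inter> H \<noteq> {}); m2 = (set (leaves t2) \<inter> H \<noteq> {});
          op = (if m1 \<and> m2 then p else if m2 then r else l)
      in op (tri_mag_eval l r p H a t1) (tri_mag_eval l r p H a t2))"

text \<open>An element of the free (non-associative) algebra in one binary operation is given as
  a finite linear combination of monomials: a list of (coefficient, tree) pairs.\<close>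
type_synonym ('k, 'v) mpoly = "('k \<times> 'v mag) list"

definition lin_comb :: "'b \<Rightarrow> ('b \<Rightarrow> 'b \<Rightarrow> 'b) \<Rightarrow> ('k \<Rightarrow> 'b \<Rightarrow> 'b)
    \<Rightarrow> ('v mag \<Rightarrow> 'b) \<Rightarrow> ('k, 'v) mpoly \<Rightarrow> 'b" where
  "lin_comb zero add smul ev \<Phi> = foldr (\<lambda>(c, t) acc. add (smul c (ev t)) acc) \<Phi> zero"

definition polylinear :: "nat \<Rightarrow> ('k, nat) mpoly \<Rightarrow> bool" where
  "polylinear n \<Phi> \<longleftrightarrow> (\<forall>(c, t) \<in> set \<Phi>. mset (leaves t) = mset [1..<Suc n])"

definition tri_ids :: "(nat \<times> ('k, nat) mpoly) set \<Rightarrow> 'b set \<Rightarrow> 'b \<Rightarrow> ('b \<Rightarrow> 'b \<Rightarrow> 'b)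
    \<Rightarrow> ('k \<Rightarrow> 'b \<Rightarrow> 'b) \<Rightarrow> ('b \<Rightarrow> 'b \<Rightarrow> 'b) \<Rightarrow> ('b \<Rightarrow> 'b \<Rightarrow> 'b) \<Rightarrow> ('b \<Rightarrow> 'b \<Rightarrow> 'b) \<Rightarrow> bool" where
  "tri_ids S C zero add smul l r p \<longleftrightarrow>
     (\<forall>a\<in>C. \<forall>b\<in>C. \<forall>c\<in>C. \<forall>f\<in>{l, r, p}. \<forall>g\<in>{l, r, p}.
        r (f a b) c = r (g a b) c \<and> l a (f b c) = l a (g b c)) \<and>
     (\<forall>(n, \<Phi>)\<in>S. \<forall>H. H \<noteq> {} \<longrightarrow> H \<subseteq> {1..n} \<longrightarrow>
        (\<forall>a. (\<forall>i. a i \<in> C) \<longrightarrow> lin_comb zero add smul (tri_mag_eval l r p H a) \<Phi> = zero))"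

definition bilinear_op :: "('k \<Rightarrow> 'a::ab_group_add \<Rightarrow> 'a) \<Rightarrow> ('a \<Rightarrow> 'a \<Rightarrow> 'a) \<Rightarrow> bool" where
  "bilinear_op scale m \<longleftrightarrow>
     (\<forall>a b c. m (a + b) c = m a c + m b c \<and> m a (b + c) = m a b + m a c) \<and>
     (\<forall>k a b. m (scale k a) b = scale k (m a b) \<and> m a (scale k b) = scale k (m a b))"

definition tri_Var_algebra :: "(nat \<times> ('k::field, nat) mpoly) set \<Rightarrow> ('k \<Rightarrow> 'a::ab_group_add \<Rightarrow> 'a)
    \<Rightarrow> ('a \<Rightarrow> 'a \<Rightarrow> 'a) \<Rightarrow> ('a \<Rightarrow> 'a \<Rightarrow> 'a) \<Rightarrow> ('a \<Rightarrow> 'a \<Rightarrow> 'a) \<Rightarrow> bool" where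
  "tri_Var_algebra S scale l r p \<longleftrightarrow>
     module scale \<and> bilinear_op scale l \<and> bilinear_op scale r \<and> bilinear_op scale p \<and>
     tri_ids S UNIV 0 (+) scale l r p"

datatype ('v, 'k) tm = TV 'v | TZ | TAdd "('v, 'k) tm" "('v, 'k) tm" | TSm 'k "('v, 'k) tm"
  | TMul "('v, 'k) tm" "('v, 'k) tm"

text \<open>The smallest congruence making the term algebra a k-algebra (vector space with bilinear
  product) satisfying all defining identities of Var (all substitution instances).\<close>
inductive fcong :: "(nat \<times> ('k::field, nat) mpoly) set \<Rightarrow> ('v, 'k) tm \<Rightarrow> ('v, 'k) tm \<Rightarrow> bool"
  for S where
  refl: "fcong S a a"
| sym: "fcong S a b \<Longrightarrow> fcong S b a"
| trans: "fcong S a b \<Longrightarrow> fcong S b c \<Longrightarrow> fcong S a c"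
| cong_add: "fcong S a a' \<Longrightarrow> fcong S b b' \<Longrightarrow> fcong S (TAdd a b) (TAdd a' b')"
| cong_sm: "fcong S a a' \<Longrightarrow> fcong S (TSm c a) (TSm c a')"
| cong_mul: "fcong S a a' \<Longrightarrow> fcong S b b' \<Longrightarrow> fcong S (TMul a b) (TMul a' b')"
| add_assoc: "fcong S (TAdd (TAdd a b) c) (TAdd a (TAdd b c))"
| add_comm: "fcong S (TAdd a b) (TAdd b a)"
| add_zero: "fcong S (TAdd TZ a) a"
| add_neg: "fcong S (TAdd a (TSm (-1) a)) TZ"
| sm_add: "fcong S (TSm c (TAdd a b)) (TAdd (TSm c a) (TSm c b))"
| add_sm: "fcong S (TSm (c + d) a) (TAdd (TSm c a) (TSm d a))"
| sm_sm: "fcong S (TSm c (TSm d a)) (TSm (c * d) a)"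
| sm_one: "fcong S (TSm 1 a) a"
| mul_add_l: "fcong S (TMul (TAdd a b) c) (TAdd (TMul a c) (TMul b c))"
| mul_add_r: "fcong S (TMul a (TAdd b c)) (TAdd (TMul a b) (TMul a c))"
| mul_sm_l: "fcong S (TMul (TSm c a) b) (TSm c (TMul a b))"
| mul_sm_r: "fcong S (TMul a (TSm c b)) (TSm c (TMul a b))"
| ident: "(n, \<Phi>) \<in> S \<Longrightarrow> fcong S (lin_comb TZ TAdd TSm (mag_eval TMul f) \<Phi>) TZ"

definition cls :: "(nat \<times> ('k::field, nat) mpoly) set \<Rightarrow> ('v, 'k) tm \<Rightarrow> ('v, 'k) tm set" where
  "cls S t = {s. fcong S t s}"

definition rep :: "('v, 'k) tm set \<Rightarrow> ('v, 'k) tm" where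
  "rep U = (SOME t. t \<in> U)"

definition zeroF :: "(nat \<times> ('k::field, nat) mpoly) set \<Rightarrow> ('v, 'k) tm set" where
  "zeroF S = cls S TZ"

definition addF :: "(nat \<times> ('k::field, nat) mpoly) set \<Rightarrow> ('v, 'k) tm set \<Rightarrow> ('v, 'k) tm set \<Rightarrow> ('v, 'k) tm set" where
  "addF S U W = cls S (TAdd (rep U) (rep W))"

definition smulF :: "(nat \<times> ('k::field, nat) mpoly) set \<Rightarrow> 'k \<Rightarrow> ('v, 'k) tm set \<Rightarrow> ('v, 'k) tm set" where
  "smulF S c U = cls S (TSm c (rep U))"

definition mulF :: "(nat \<times> ('k::field, nat) mpoly) set \<Rightarrow> ('v, 'k) tm set \<Rightarrow> ('v, 'k) tm set \<Rightarrow> ('v, 'k) tm set" where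
  "mulF S U W = cls S (TMul (rep U) (rep W))"

text \<open>Variables of F: Inl x stands for x, Inr x for the dotted copy x-dot.
  phi is the homomorphism with phi(x) = phi(x-dot) = x.\<close>
fun phiT :: "('x + 'x, 'k) tm \<Rightarrow> ('x + 'x, 'k) tm" where
  "phiT (TV v) = TV (Inl (case v of Inl x \<Rightarrow> x | Inr x \<Rightarrow> x))"
| "phiT TZ = TZ"
| "phiT (TAdd a b) = TAdd (phiT a) (phiT b)"
| "phiT (TSm c a) = TSm c (phiT a)"
| "phiT (TMul a b) = TMul (phiT a) (phiT b)"

definition phiF :: "(nat \<times> ('k::field, nat) mpoly) set \<Rightarrow> ('x + 'x, 'k) tm set \<Rightarrow> ('x + 'x, 'k) tm set" where
  "phiF S U = cls S (phiT (rep U))"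

definition vdashF :: "(nat \<times> ('k::field, nat) mpoly) set \<Rightarrow> ('x + 'x, 'k) tm set \<Rightarrow> ('x + 'x, 'k) tm set \<Rightarrow> ('x + 'x, 'k) tm set" where
  "vdashF S U W = mulF S (phiF S U) W"

definition dashvF :: "(nat \<times> ('k::field, nat) mpoly) set \<Rightarrow> ('x + 'x, 'k) tm set \<Rightarrow> ('x + 'x, 'k) tm set \<Rightarrow> ('x + 'x, 'k) tm set" where
  "dashvF S U W = mulF S U (phiF S W)"

definition perpF :: "(nat \<times> ('k::field, nat) mpoly) set \<Rightarrow> ('x + 'x, 'k) tm set \<Rightarrow> ('x + 'x, 'k) tm set \<Rightarrow> ('x + 'x, 'k) tm set" where
  "perpF S U W = mulF S U W"

definition dotF :: "(nat \<times> ('k::field, nat) mpoly) set \<Rightarrow> 'x \<Rightarrow> ('x + 'x, 'k) tm set" where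
  "dotF S x = cls S (TV (Inr x))"

inductive_set Vset :: "(nat \<times> ('k::field, nat) mpoly) set \<Rightarrow> 'x set \<Rightarrow> ('x + 'x, 'k) tm set set"
  for S X where
  gen: "x \<in> X \<Longrightarrow> dotF S x \<in> Vset S X"
| zero: "zeroF S \<in> Vset S X"
| add: "U \<in> Vset S X \<Longrightarrow> W \<in> Vset S X \<Longrightarrow> addF S U W \<in> Vset S X"
| smul: "U \<in> Vset S X \<Longrightarrow> smulF S c U \<in> Vset S X"
| dashv: "U \<in> Vset S X \<Longrightarrow> W \<in> Vset S X \<Longrightarrow> dashvF S U W \<in> Vset S X"
| vdash: "U \<in> Vset S X \<Longrightarrow> W \<in> Vset S X \<Longrightarrow> vdashF S U W \<in> Vset S X"
| perp: "U \<in> Vset S X \<Longrightarrow> W \<in> Vset S X \<Longrightarrow> perpF S U W \<in> Vset S X"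

definition tri_hom_V :: "(nat \<times> ('k::field, nat) mpoly) set \<Rightarrow> 'x set \<Rightarrow> ('k \<Rightarrow> 'a::ab_group_add \<Rightarrow> 'a)
    \<Rightarrow> ('a \<Rightarrow> 'a \<Rightarrow> 'a) \<Rightarrow> ('a \<Rightarrow> 'a \<Rightarrow> 'a) \<Rightarrow> ('a \<Rightarrow> 'a \<Rightarrow> 'a) \<Rightarrow> (('x + 'x, 'k) tm set \<Rightarrow> 'a) \<Rightarrow> bool" where
  "tri_hom_V S X scale l r p \<chi> \<longleftrightarrow>
     (\<forall>U\<in>Vset S X. \<forall>W\<in>Vset S X.
        \<chi> (addF S U W) = \<chi> U + \<chi> W \<and>
        \<chi> (dashvF S U W) = l (\<chi> U) (\<chi> W) \<and>
        \<chi> (vdashF S U W) = r (\<chi> U) (\<chi> W) \<and>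
        \<chi> (perpF S U W) = p (\<chi> U) (\<chi> W)) \<and>
     (\<forall>c. \<forall>U\<in>Vset S X. \<chi> (smulF S c U) = scale c (\<chi> U))"

end

(* V satisfies the identities of tri-Var because in F^(3) a monomial with a nonempty set of
   marked arguments is an ordinary product in F in which the unmarked arguments are replaced
   by their phi-images, and F is a Var-algebra.

   For the universal property, give A + A the product
     (u, v) (u', v') = (u perp u', u vdash v' + v dashv u' + v perp v'),
   the second summand holding the "marked" part. By polylinearity every defining identity of
   Var splits into instances whose arguments are purely marked or purely unmarked, and these
   are exactly the identities defining tri-Var, so A + A is a Var-algebra. Evaluating F in it
   by x |-> (alpha x, 0), x-dot |-> (0, alpha x) maps V into 0 + A, and the second coordinate
   is the required homomorphism chi. It respects vdash and dashv because, by the replication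
   identities, the second coordinate of an element f of V behaves like the perp-value of
   phi(f) as a left factor of vdash and a right factor of dashv. Uniqueness holds since V is
   generated by the dotted letters. *)

theory Submission
  imports Defs "HOL-Library.Product_Plus"
begin

lemma lin_comb_Nil [simp]: "lin_comb z add smul ev [] = z"
  by (simp add: lin_comb_def)

lemma lin_comb_Cons [simp]:
  "lin_comb z add smul ev ((c, t) # \<Phi>) = add (smul c (ev t)) (lin_comb z add smul ev \<Phi>)"
  by (simp add: lin_comb_def)

lemma lin_comb_cong:
  "(\<And>c t. (c, t) \<in> set \<Phi> \<Longrightarrow> ev t = ev' t) \<Longrightarrow> lin_comb z add smul ev \<Phi> = lin_comb z add smul ev' \<Phi>"
  by (induction \<Phi>) (simp, metis list.set_intros lin_comb_Cons prod.collapse)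

lemma lin_comb_map:
  assumes "h z = z'" "\<And>x y. h (add x y) = add' (h x) (h y)" "\<And>c x. h (smul c x) = smul' c (h x)"
  shows "h (lin_comb z add smul ev \<Phi>) = lin_comb z' add' smul' (h \<circ> ev) \<Phi>"
  by (induction \<Phi>) (auto simp: assms)

lemma lin_comb_add:
  "module scale \<Longrightarrow> lin_comb 0 (+) scale (\<lambda>t. ev t + ev' t) \<Phi>
     = lin_comb 0 (+) scale ev \<Phi> + lin_comb 0 (+) scale ev' \<Phi>"
  by (induction \<Phi>) (auto simp: module.scale_right_distrib algebra_simps)

lemma lin_comb_zero: "module scale \<Longrightarrow> lin_comb 0 (+) scale (\<lambda>t. 0) \<Phi> = 0"
  by (induction \<Phi>) (auto simp: module.scale_zero_right)

lemma leaves_nonempty: "leaves t \<noteq> []"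
  by (induction t) auto

lemma set_leaves_polylinear:
  "polylinear n \<Phi> \<Longrightarrow> (c, t) \<in> set \<Phi> \<Longrightarrow> set (leaves t) = {1..n}"
  unfolding polylinear_def
  by (metis (mono_tags, lifting) atLeastLessThanSuc_atLeastAtMost case_prodD set_mset_mset set_upt)

lemma count_leaves_polylinear:
  "polylinear n \<Phi> \<Longrightarrow> (c, t) \<in> set \<Phi> \<Longrightarrow> k \<in> {1..n} \<Longrightarrow> count (mset (leaves t)) k = 1"
  unfolding polylinear_def by (auto simp: distinct_count_atmost_1[THEN iffD1, OF distinct_upt])

lemma mag_eval_cong:
  "(\<And>i. i \<in> set (leaves t) \<Longrightarrow> a i = a' i) \<Longrightarrow> mag_eval m a t = mag_eval m a' t"
  by (induction t) auto

lemma mag_eval_map: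
  "(\<And>x y. h (m x y) = m' (h x) (h y)) \<Longrightarrow> h (mag_eval m a t) = mag_eval m' (h \<circ> a) t"
  by (induction t) auto

lemma tri_mag_eval_unmarked:
  "set (leaves t) \<inter> H = {} \<Longrightarrow> tri_mag_eval l r p H a t = mag_eval l a t"
  by (induction t) (auto simp: Let_def Int_Un_distrib2)

lemma tri_mag_eval_all_marked:
  "set (leaves t) \<subseteq> H \<Longrightarrow> tri_mag_eval l r p H a t = mag_eval p a t"
proof (induction t)
  case (Node t1 t2)
  then have "set (leaves t1) \<inter> H \<noteq> {}" "set (leaves t2) \<inter> H \<noteq> {}"
    using leaves_nonempty[of t1] leaves_nonempty[of t2] by (auto simp: neq_Nil_conv)
  with Node show ?case by (auto simp: Let_def)
qed simp

lemma bilinear_op_simps: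
  assumes "bilinear_op scale m" "module scale"
  shows "m (x + y) z = m x z + m y z" "m z (x + y) = m z x + m z y"
    "m (scale c x) y = scale c (m x y)" "m x (scale c y) = scale c (m x y)"
    "m 0 y = 0" "m x 0 = 0"
proof -
  show "m (x + y) z = m x z + m y z" "m z (x + y) = m z x + m z y"
    "m (scale c x) y = scale c (m x y)" "m x (scale c y) = scale c (m x y)"
    using assms(1) unfolding bilinear_op_def by auto
  have "m (0 + 0) y = m 0 y + m 0 y" "m x (0 + 0) = m x 0 + m x 0"
    using assms(1) unfolding bilinear_op_def by blast+
  then show "m 0 y = 0" "m x 0 = 0" by simp_all
qed

lemma mag_eval_update_add:
  assumes "bilinear_op scale m" "module scale" "count (mset (leaves t)) k = 1"
  shows "mag_eval m (a(k := u + v)) t = mag_eval m (a(k := u)) t + mag_eval m (a(k := v)) t"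
  using assms(3)
proof (induction t)
  case (Node t1 t2)
  have "count (mset (leaves t1)) k + count (mset (leaves t2)) k = 1" using Node.prems by simp
  then have "count (mset (leaves t1)) k = 1 \<and> count (mset (leaves t2)) k = 0 \<or>
      count (mset (leaves t2)) k = 1 \<and> count (mset (leaves t1)) k = 0" by linarith
  then consider "count (mset (leaves t1)) k = 1" "k \<notin> set (leaves t2)"
    | "count (mset (leaves t2)) k = 1" "k \<notin> set (leaves t1)"
    by (auto simp flip: count_mset_0_iff)
  then show ?case
  proof cases
    case 1
    then have "mag_eval m (a(k := w)) t2 = mag_eval m a t2" for w by (intro mag_eval_cong) auto
    then show ?thesis
      by (simp only: mag_eval.simps Node.IH(1)[OF 1(1)] bilinear_op_simps[OF assms(1,2)])
  next
    case 2
    then have "mag_eval m (a(k := w)) t1 = mag_eval m a t1" for w by (intro mag_eval_cong) auto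
    then show ?thesis
      by (simp only: mag_eval.simps Node.IH(2)[OF 2(1)] bilinear_op_simps[OF assms(1,2)])
  qed
qed auto

section \<open>The free algebra \<open>F\<close> and the subalgebra \<open>V\<close> of \<open>F\<^sup>(\<^sup>3\<^sup>)\<close>\<close>

lemma cls_eq_iff: "cls S a = cls S b \<longleftrightarrow> fcong S a b"
  unfolding cls_def by (auto intro: fcong.refl fcong.sym fcong.trans)

lemma fcong_rep_cls: "fcong S t (rep (cls S t))"
  unfolding rep_def cls_def by (metis (mono_tags) fcong.refl mem_Collect_eq someI)

lemma cls_rep_cls [simp]: "cls S (rep (cls S t)) = cls S t"
  using cls_eq_iff fcong.sym fcong_rep_cls by metis

lemma addF_cls [simp]: "addF S (cls S a) (cls S b) = cls S (TAdd a b)"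
  unfolding addF_def cls_eq_iff by (intro fcong.cong_add fcong.sym[OF fcong_rep_cls])

lemma smulF_cls [simp]: "smulF S c (cls S a) = cls S (TSm c a)"
  unfolding smulF_def cls_eq_iff by (intro fcong.cong_sm fcong.sym[OF fcong_rep_cls])

lemma mulF_cls [simp]: "mulF S (cls S a) (cls S b) = cls S (TMul a b)"
  unfolding mulF_def cls_eq_iff by (intro fcong.cong_mul fcong.sym[OF fcong_rep_cls])

lemma fcong_phiT: "fcong S a b \<Longrightarrow> fcong S (phiT a) (phiT b)"
proof (induction rule: fcong.induct)
  case (ident n \<Phi> a)
  have "phiT \<circ> mag_eval TMul a = mag_eval TMul (phiT \<circ> a)"
    by (rule ext) (simp add: mag_eval_map[where h = phiT])
  moreover have "phiT (lin_comb TZ TAdd TSm (mag_eval TMul a) \<Phi>)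
      = lin_comb TZ TAdd TSm (phiT \<circ> mag_eval TMul a) \<Phi>"
    by (rule lin_comb_map) simp_all
  ultimately show ?case using fcong.ident[OF ident, of "phiT \<circ> a"] by simp
qed (auto intro: fcong.intros)

lemma phiF_cls [simp]: "phiF S (cls S t) = cls S (phiT t)"
  unfolding phiF_def cls_eq_iff by (intro fcong_phiT fcong.sym[OF fcong_rep_cls])

lemma dashvF_cls [simp]: "dashvF S (cls S a) (cls S b) = cls S (TMul a (phiT b))"
  and vdashF_cls [simp]: "vdashF S (cls S a) (cls S b) = cls S (TMul (phiT a) b)"
  and perpF_cls [simp]: "perpF S (cls S a) (cls S b) = cls S (TMul a b)"
  by (simp_all add: dashvF_def vdashF_def perpF_def)

lemma phiT_idem [simp]: "phiT (phiT t) = phiT t"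
  by (induction t) auto

lemma phiF_idem [simp]: "phiF S (phiF S U) = phiF S U"
  by (simp add: phiF_def[of S U])

lemma phiF_mulF: "phiF S (mulF S U W) = mulF S (phiF S U) (phiF S W)"
  by (simp add: mulF_def[of S U W] phiF_def[of S U] phiF_def[of S W])

lemma phiF_tri_ops:
  "phiF S (dashvF S U W) = mulF S (phiF S U) (phiF S W)"
  "phiF S (vdashF S U W) = mulF S (phiF S U) (phiF S W)"
  "phiF S (perpF S U W) = mulF S (phiF S U) (phiF S W)"
  by (simp_all add: dashvF_def vdashF_def perpF_def phiF_mulF)

lemma Vset_cls_rep: "U \<in> Vset S X \<Longrightarrow> cls S (rep U) = U"
  by (induction rule: Vset.induct)
    (simp_all add: dotF_def zeroF_def addF_def smulF_def dashvF_def vdashF_def perpF_def mulF_def)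

lemma Vset_tri_ops_cls:
  assumes "U \<in> Vset S X" "W \<in> Vset S X"
  shows "dashvF S U W = cls S (TMul (rep U) (phiT (rep W)))"
    "vdashF S U W = cls S (TMul (phiT (rep U)) (rep W))"
    "perpF S U W = cls S (TMul (rep U) (rep W))"
  using dashvF_cls vdashF_cls perpF_cls Vset_cls_rep[OF assms(1)] Vset_cls_rep[OF assms(2)] by metis+

lemma F_satisfies_identities:
  assumes "(n, \<Phi>) \<in> S" and "\<And>i. cls S (rep (a i)) = a i"
  shows "lin_comb (zeroF S) (addF S) (smulF S) (mag_eval (mulF S) a) \<Phi> = zeroF S"
proof -
  have a: "cls S \<circ> (rep \<circ> a) = a"
    using assms(2) by (simp add: comp_def)
  have "mag_eval (mulF S) a = cls S \<circ> mag_eval TMul (rep \<circ> a)"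
    using mag_eval_map[of "cls S" TMul "mulF S" "rep \<circ> a", unfolded a] by (simp add: fun_eq_iff)
  moreover have "cls S (lin_comb TZ TAdd TSm (mag_eval TMul (rep \<circ> a)) \<Phi>)
      = lin_comb (zeroF S) (addF S) (smulF S) (cls S \<circ> mag_eval TMul (rep \<circ> a)) \<Phi>"
    by (rule lin_comb_map) (simp_all add: zeroF_def)
  ultimately have "lin_comb (zeroF S) (addF S) (smulF S) (mag_eval (mulF S) a) \<Phi>
      = cls S (lin_comb TZ TAdd TSm (mag_eval TMul (rep \<circ> a)) \<Phi>)"
    by simp
  also have "\<dots> = zeroF S"
    unfolding zeroF_def cls_eq_iff using assms(1) by (rule fcong.ident)
  finally show ?thesis .
qed

lemma phiF_tri_mag_eval:
  "phiF S (tri_mag_eval (dashvF S) (vdashF S) (perpF S) H a t) = mag_eval (mulF S) (phiF S \<circ> a) t"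
  by (induction t) (simp_all add: Let_def phiF_tri_ops)

lemma tri_mag_eval_F:
  assumes "set (leaves t) \<inter> H \<noteq> {}"
  shows "tri_mag_eval (dashvF S) (vdashF S) (perpF S) H a t
     = mag_eval (mulF S) (\<lambda>i. if i \<in> H then a i else phiF S (a i)) t"
  using assms
proof (induction t)
  case (Node t1 t2)
  let ?T = "tri_mag_eval (dashvF S) (vdashF S) (perpF S) H a"
  let ?a' = "\<lambda>i. if i \<in> H then a i else phiF S (a i)"
  have unmarked: "mag_eval (mulF S) (phiF S \<circ> a) s = mag_eval (mulF S) ?a' s"
    if "set (leaves s) \<inter> H = {}" for s
    using that by (intro mag_eval_cong) auto
  consider "set (leaves t1) \<inter> H \<noteq> {}" "set (leaves t2) \<inter> H \<noteq> {}"
    | "set (leaves t1) \<inter> H = {}" "set (leaves t2) \<inter> H \<noteq> {}"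
    | "set (leaves t1) \<inter> H \<noteq> {}" "set (leaves t2) \<inter> H = {}"
    using Node.prems by auto
  then show ?case
  proof cases
    case 1
    then show ?thesis by (simp add: Node.IH(1)[OF 1(1)] Node.IH(2)[OF 1(2)]) (simp add: perpF_def)
  next
    case 2
    then have "?T (Node t1 t2) = mulF S (phiF S (?T t1)) (?T t2)"
      by (simp add: vdashF_def[symmetric])
    with 2 show ?thesis by (simp add: Node.IH(2) phiF_tri_mag_eval unmarked)
  next
    case 3
    then have "?T (Node t1 t2) = mulF S (?T t1) (phiF S (?T t2))"
      by (simp add: dashvF_def[symmetric])
    with 3 show ?thesis by (simp add: Node.IH(1) phiF_tri_mag_eval unmarked)
  qed
qed auto

lemma phiF_tri_op:
  "f \<in> {dashvF S, vdashF S, perpF S} \<Longrightarrow> phiF S (f U W) = mulF S (phiF S U) (phiF S W)"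
  by (auto simp: phiF_tri_ops)

lemma V_tri_identities:
  fixes S :: "(nat \<times> ('k::field, nat) mpoly) set" and X :: "'x set"
  assumes "\<forall>(n, \<Phi>) \<in> S. polylinear n \<Phi>"
  shows "tri_ids S (Vset S X) (zeroF S) (addF S) (smulF S) (dashvF S) (vdashF S) (perpF S)"
proof -
  have "vdashF S (f a b) c = vdashF S (g a b) c \<and> dashvF S a (f b c) = dashvF S a (g b c)"
    if "f \<in> {dashvF S, vdashF S, perpF S}" "g \<in> {dashvF S, vdashF S, perpF S}"
    for a b c :: "('x + 'x, 'k) tm set" and f g
    by (simp add: vdashF_def dashvF_def phiF_tri_op[OF that(1)] phiF_tri_op[OF that(2)])
  then have replication: "\<forall>a\<in>Vset S X. \<forall>b\<in>Vset S X. \<forall>c\<in>Vset S X.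
      \<forall>f\<in>{dashvF S, vdashF S, perpF S}. \<forall>g\<in>{dashvF S, vdashF S, perpF S}.
        vdashF S (f a b) c = vdashF S (g a b) c \<and> dashvF S a (f b c) = dashvF S a (g b c)"
    by blast
  have identities: "lin_comb (zeroF S) (addF S) (smulF S)
      (tri_mag_eval (dashvF S) (vdashF S) (perpF S) H a) \<Phi> = zeroF S"
    if S: "(n, \<Phi>) \<in> S" and H: "H \<noteq> {}" "H \<subseteq> {1..n}" and aV: "\<forall>i. a i \<in> Vset S X"
    for n \<Phi> H a
  proof -
    let ?a' = "\<lambda>i. if i \<in> H then a i else phiF S (a i)"
    have "lin_comb (zeroF S) (addF S) (smulF S) (tri_mag_eval (dashvF S) (vdashF S) (perpF S) H a) \<Phi>
        = lin_comb (zeroF S) (addF S) (smulF S) (mag_eval (mulF S) ?a') \<Phi>"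
    proof (rule lin_comb_cong)
      fix c t assume "(c, t) \<in> set \<Phi>"
      moreover have "polylinear n \<Phi>" using assms S by auto
      ultimately have "set (leaves t) = {1..n}" by (rule set_leaves_polylinear[rotated])
      then show "tri_mag_eval (dashvF S) (vdashF S) (perpF S) H a t = mag_eval (mulF S) ?a' t"
        using H by (intro tri_mag_eval_F) auto
    qed
    also have "\<dots> = zeroF S"
    proof (rule F_satisfies_identities[OF S])
      show "cls S (rep (?a' i)) = ?a' i" for i
        using Vset_cls_rep[OF aV[rule_format]] by (simp add: phiF_def)
    qed
    finally show ?thesis .
  qed
  show ?thesis
    unfolding tri_ids_def by (rule conjI[OF replication]) (clarify, rule identities, assumption+)
qed

lemma tri_hom_V_zero:
  fixes \<chi> :: "('x + 'x, 'k::field) tm set \<Rightarrow> 'a::ab_group_add"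
  assumes "tri_hom_V S X scale l r p \<chi>"
  shows "\<chi> (zeroF S) = 0"
proof -
  have "addF S (zeroF S) (zeroF S) = (zeroF S :: ('x + 'x, 'k) tm set)"
    unfolding zeroF_def addF_cls cls_eq_iff by (rule fcong.add_zero)
  moreover have "\<chi> (addF S (zeroF S) (zeroF S)) = \<chi> (zeroF S) + \<chi> (zeroF S)"
    using assms Vset.zero unfolding tri_hom_V_def by blast
  ultimately show ?thesis by simp
qed

lemma tri_hom_V_unique:
  assumes "tri_hom_V S X scale l r p \<chi>" "tri_hom_V S X scale l r p \<chi>'"
    and "\<forall>x\<in>X. \<chi> (dotF S x) = \<chi>' (dotF S x)" and "U \<in> Vset S X"
  shows "\<chi> U = \<chi>' U"
  using assms(4)
  by (induction rule: Vset.induct)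
    (use assms(1-3) tri_hom_V_zero[OF assms(1)] tri_hom_V_zero[OF assms(2)] in
      \<open>simp_all add: tri_hom_V_def\<close>)

definition Var_algebra :: "(nat \<times> ('k::field, nat) mpoly) set \<Rightarrow> ('k \<Rightarrow> 'b::ab_group_add \<Rightarrow> 'b)
    \<Rightarrow> ('b \<Rightarrow> 'b \<Rightarrow> 'b) \<Rightarrow> bool" where
  "Var_algebra S scale m \<longleftrightarrow> module scale \<and> bilinear_op scale m \<and>
     (\<forall>(n, \<Phi>) \<in> S. \<forall>a. lin_comb 0 (+) scale (mag_eval m a) \<Phi> = 0)"

fun tm_eval :: "('k \<Rightarrow> 'b::ab_group_add \<Rightarrow> 'b) \<Rightarrow> ('b \<Rightarrow> 'b \<Rightarrow> 'b) \<Rightarrow> ('v \<Rightarrow> 'b) \<Rightarrow> ('v, 'k) tm \<Rightarrow> 'b"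
  where
  "tm_eval scale m \<beta> (TV v) = \<beta> v"
| "tm_eval scale m \<beta> TZ = 0"
| "tm_eval scale m \<beta> (TAdd a b) = tm_eval scale m \<beta> a + tm_eval scale m \<beta> b"
| "tm_eval scale m \<beta> (TSm c a) = scale c (tm_eval scale m \<beta> a)"
| "tm_eval scale m \<beta> (TMul a b) = m (tm_eval scale m \<beta> a) (tm_eval scale m \<beta> b)"

lemma tm_eval_fcong:
  assumes "Var_algebra S scale m" and "fcong S s t"
  shows "tm_eval scale m \<beta> s = tm_eval scale m \<beta> t"
proof -
  have md: "module scale" and bl: "bilinear_op scale m"
    and ids: "\<forall>(n, \<Phi>) \<in> S. \<forall>a. lin_comb 0 (+) scale (mag_eval m a) \<Phi> = 0"
    using assms(1) unfolding Var_algebra_def by auto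
  from assms(2) show ?thesis
  proof (induction rule: fcong.induct)
    case (ident n \<Phi> a)
    have "tm_eval scale m \<beta> \<circ> mag_eval TMul a = mag_eval m (tm_eval scale m \<beta> \<circ> a)"
      by (rule ext) (simp add: mag_eval_map[where h = "tm_eval scale m \<beta>"])
    moreover have "tm_eval scale m \<beta> (lin_comb TZ TAdd TSm ev \<Phi>)
        = lin_comb 0 (+) scale (tm_eval scale m \<beta> \<circ> ev) \<Phi>" for ev
      by (rule lin_comb_map) simp_all
    ultimately show ?case using ids ident by auto
  qed (simp_all add: bilinear_op_simps[OF bl md] module.scale_left_distrib[OF md]
      module.scale_right_distrib[OF md] module.scale_minus_left[OF md]
      module.scale_one[OF md] module.scale_scale[OF md] algebra_simps)
qed

section \<open>The doubled algebra of a \<open>tri-Var\<close>-algebra\<close>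

locale tri_Var_target =
  fixes S :: "(nat \<times> ('k::field, nat) mpoly) set"
    and scale :: "'k \<Rightarrow> 'a::ab_group_add \<Rightarrow> 'a"
    and l r p :: "'a \<Rightarrow> 'a \<Rightarrow> 'a"
  assumes polylinear_ids: "\<forall>(n, \<Phi>) \<in> S. polylinear n \<Phi>"
    and tri_Var: "tri_Var_algebra S scale l r p"
begin

lemma module_scale: "module scale"
  and bilinear: "bilinear_op scale l" "bilinear_op scale r" "bilinear_op scale p"
  and tri_identities: "tri_ids S UNIV 0 (+) scale l r p"
  using tri_Var unfolding tri_Var_algebra_def by auto

lemmas bilinear_simps [simp] =
  bilinear_op_simps[OF bilinear(1) module_scale] bilinear_op_simps[OF bilinear(2) module_scale]
  bilinear_op_simps[OF bilinear(3) module_scale]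

lemmas scale_simps [simp] =
  module.scale_right_distrib[OF module_scale] module.scale_left_distrib[OF module_scale]
  module.scale_zero_right[OF module_scale] module.scale_zero_left[OF module_scale]
  module.scale_scale[OF module_scale] module.scale_one[OF module_scale]

lemma replication: "f \<in> {l, r, p} \<Longrightarrow> g \<in> {l, r, p} \<Longrightarrow>
    r (f a b) c = r (g a b) c \<and> l a (f b c) = l a (g b c)"
  using tri_identities unfolding tri_ids_def by blast

lemma marked_identity:
  assumes "(n, \<Phi>) \<in> S" "H \<noteq> {}" "H \<subseteq> {1..n}"
  shows "lin_comb 0 (+) scale (tri_mag_eval l r p H a) \<Phi> = 0"
proof -
  have "\<forall>(n, \<Phi>) \<in> S. \<forall>H. H \<noteq> {} \<longrightarrow> H \<subseteq> {1..n} \<longrightarrow>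
      (\<forall>a. (\<forall>i. a i \<in> UNIV) \<longrightarrow> lin_comb 0 (+) scale (tri_mag_eval l r p H a) \<Phi> = 0)"
    using tri_identities unfolding tri_ids_def by (rule conjunct2)
  then have "case (n, \<Phi>) of (n, \<Phi>) \<Rightarrow> \<forall>H. H \<noteq> {} \<longrightarrow> H \<subseteq> {1..n} \<longrightarrow>
      (\<forall>a. (\<forall>i. a i \<in> UNIV) \<longrightarrow> lin_comb 0 (+) scale (tri_mag_eval l r p H a) \<Phi> = 0)"
    using assms(1) by (rule bspec)
  with assms(2,3) show ?thesis by simp
qed

lemma polylinear_identity: "(n, \<Phi>) \<in> S \<Longrightarrow> polylinear n \<Phi>"
  using polylinear_ids by auto

lemma perp_identity:
  assumes S: "(n, \<Phi>) \<in> S"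
  shows "lin_comb 0 (+) scale (mag_eval p a) \<Phi> = 0"
proof (cases "n = 0")
  case True
  have "(c, t) \<notin> set \<Phi>" for c t
    using set_leaves_polylinear[OF polylinear_identity[OF S], of c t] True leaves_nonempty[of t] by auto
  then have "\<Phi> = []" by (metis last_in_set surj_pair)
  then show ?thesis by simp
next
  case False
  have "lin_comb 0 (+) scale (mag_eval p a) \<Phi> = lin_comb 0 (+) scale (tri_mag_eval l r p {1..n} a) \<Phi>"
    by (rule lin_comb_cong) (simp add: tri_mag_eval_all_marked set_leaves_polylinear[OF polylinear_identity[OF S]])
  also have "\<dots> = 0" using False by (intro marked_identity[OF S]) auto
  finally show ?thesis .
qed

lemma Var_algebra_perp: "Var_algebra S scale p"
  unfolding Var_algebra_def using module_scale bilinear(3) perp_identity by auto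

definition ctx_equiv :: "'a \<Rightarrow> 'a \<Rightarrow> bool" where
  "ctx_equiv x y \<longleftrightarrow> (\<forall>w. r x w = r y w \<and> l w x = l w y)"

lemma ctx_equiv_refl [simp]: "ctx_equiv x x"
  by (simp add: ctx_equiv_def)

lemma ctx_equiv_add: "ctx_equiv x x' \<Longrightarrow> ctx_equiv y y' \<Longrightarrow> ctx_equiv (x + y) (x' + y')"
  by (simp add: ctx_equiv_def)

lemma ctx_equiv_scale: "ctx_equiv x x' \<Longrightarrow> ctx_equiv (scale c x) (scale c x')"
  by (simp add: ctx_equiv_def)

lemma ctx_equiv_tri_op:
  assumes "f \<in> {l, r, p}" "g \<in> {l, r, p}" and x: "ctx_equiv x x'" and y: "ctx_equiv y y'"
  shows "ctx_equiv (f x y) (g x' y')"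
  unfolding ctx_equiv_def
proof
  fix w
  have "r (f x y) w = r (r x y) w" using replication assms(1) by blast
  also have "\<dots> = r (r x' y) w" using x by (simp add: ctx_equiv_def)
  also have "\<dots> = r (l x' y) w" using replication by blast
  also have "\<dots> = r (l x' y') w" using y by (simp add: ctx_equiv_def)
  also have "\<dots> = r (g x' y') w" using replication assms(2) by blast
  finally show "r (f x y) w = r (g x' y') w \<and> l w (f x y) = l w (g x' y')"
  proof
    have "l w (f x y) = l w (r x y)" using replication assms(1) by blast
    also have "\<dots> = l w (r x' y)" using x by (simp add: ctx_equiv_def)
    also have "\<dots> = l w (l x' y)" using replication by blast
    also have "\<dots> = l w (l x' y')" using y by (simp add: ctx_equiv_def)
    also have "\<dots> = l w (g x' y')" using replication assms(2) by blast
    finally show "l w (f x y) = l w (g x' y')" .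
  qed
qed

lemma ctx_equiv_mag_eval: "ctx_equiv (mag_eval p a t) (mag_eval l a t)"
  by (induction t) (auto intro: ctx_equiv_tri_op)

text \<open>A pair \<open>(u, v)\<close> stands for \<open>u + v\<close> with \<open>v\<close> marked; factors are multiplied by \<open>\<perp>\<close>,
  \<open>\<turnstile>\<close> or \<open>\<stileturn>\<close> according to which of them are marked, as in \<open>tri_mag_eval\<close>.\<close>
definition dscale :: "'k \<Rightarrow> 'a \<times> 'a \<Rightarrow> 'a \<times> 'a" where
  "dscale c x = (scale c (fst x), scale c (snd x))"

definition dmul :: "'a \<times> 'a \<Rightarrow> 'a \<times> 'a \<Rightarrow> 'a \<times> 'a" where
  "dmul x y = (p (fst x) (fst y), r (fst x) (snd y) + l (snd x) (fst y) + p (snd x) (snd y))"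

lemma dscale_Pair [simp]: "dscale c (u, v) = (scale c u, scale c v)"
  by (simp add: dscale_def)

lemma dmul_Pair [simp]: "dmul (u, v) (u', v') = (p u u', r u v' + l v u' + p v v')"
  by (simp add: dmul_def)

lemma module_dscale: "module dscale"
  by unfold_locales (simp_all add: dscale_def)

lemma bilinear_dmul: "bilinear_op dscale dmul"
  unfolding bilinear_op_def by (simp add: dmul_def dscale_def algebra_simps)

definition mark :: "nat set \<Rightarrow> (nat \<Rightarrow> 'a) \<Rightarrow> nat \<Rightarrow> 'a \<times> 'a" where
  "mark H a i = (if i \<in> H then (0, a i) else (a i, 0))"

lemma mag_eval_dmul_mark:
  "mag_eval dmul (mark H a) t = (if set (leaves t) \<inter> H = {} then (mag_eval p a t, 0)
     else (0, tri_mag_eval l r p H a t))"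
proof (induction t)
  case (Node t1 t2)
  have ctx: "r (mag_eval p a s) w = r (mag_eval l a s) w" "l w (mag_eval p a s) = l w (mag_eval l a s)"
    for s w using ctx_equiv_mag_eval[of a s] by (simp_all add: ctx_equiv_def)
  show ?case
    using Node by (auto simp: Let_def Int_Un_distrib2 ctx tri_mag_eval_unmarked)
qed (simp add: mark_def)

lemma fst_lin_comb_dscale: "fst (lin_comb 0 (+) dscale ev \<Phi>) = lin_comb 0 (+) scale (fst \<circ> ev) \<Phi>"
  by (rule lin_comb_map) (simp_all add: dscale_def)

lemma snd_lin_comb_dscale: "snd (lin_comb 0 (+) dscale ev \<Phi>) = lin_comb 0 (+) scale (snd \<circ> ev) \<Phi>"
  by (rule lin_comb_map) (simp_all add: dscale_def)

lemma snd_identity_marked: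
  assumes S: "(n, \<Phi>) \<in> S" and "H \<subseteq> {1..n}"
  shows "snd (lin_comb 0 (+) dscale (mag_eval dmul (mark H a)) \<Phi>) = 0"
proof (cases "H = {}")
  case True
  then show ?thesis
    by (simp add: snd_lin_comb_dscale mag_eval_dmul_mark comp_def lin_comb_zero[OF module_scale])
next
  case False
  have "snd (lin_comb 0 (+) dscale (mag_eval dmul (mark H a)) \<Phi>)
      = lin_comb 0 (+) scale (tri_mag_eval l r p H a) \<Phi>"
    unfolding snd_lin_comb_dscale
  proof (rule lin_comb_cong)
    fix c t assume "(c, t) \<in> set \<Phi>"
    then have "set (leaves t) = {1..n}" by (rule set_leaves_polylinear[OF polylinear_identity[OF S]])
    then show "(snd \<circ> mag_eval dmul (mark H a)) t = tri_mag_eval l r p H a t"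
      using False assms(2) by (auto simp: mag_eval_dmul_mark)
  qed
  also have "\<dots> = 0" using S False assms(2) by (rule marked_identity)
  finally show ?thesis .
qed

text \<open>Induction on the set \<open>K\<close> of arguments not yet split, by multilinearity, into their
  unmarked and marked parts.\<close>
lemma snd_identity_split:
  fixes b :: "nat \<Rightarrow> 'a \<times> 'a"
  assumes "finite K" and S: "(n, \<Phi>) \<in> S"
    and "\<forall>i\<in>{1..n} - K. fst (b i) = 0 \<or> snd (b i) = 0"
  shows "snd (lin_comb 0 (+) dscale (mag_eval dmul b) \<Phi>) = 0"
  using assms(1,3)
proof (induction K arbitrary: b rule: finite_induct)
  case empty
  define H where "H = {i \<in> {1..n}. fst (b i) = 0}"
  define a where "a i = (if i \<in> H then snd (b i) else fst (b i))" for i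
  have "mag_eval dmul b t = mag_eval dmul (mark H a) t" if "(c, t) \<in> set \<Phi>" for c t
    using empty.prems set_leaves_polylinear[OF polylinear_identity[OF S] that]
    by (intro mag_eval_cong) (auto simp: mark_def H_def a_def prod_eq_iff)
  then have "lin_comb 0 (+) dscale (mag_eval dmul b) \<Phi> = lin_comb 0 (+) dscale (mag_eval dmul (mark H a)) \<Phi>"
    by (rule lin_comb_cong)
  moreover have "H \<subseteq> {1..n}" by (auto simp: H_def)
  ultimately show ?case using snd_identity_marked[OF S] by simp
next
  case (insert k K)
  show ?case
  proof (cases "k \<in> {1..n}")
    case False
    then show ?thesis using insert by auto
  next
    case True
    define b1 where "b1 = b(k := (fst (b k), 0))"
    define b2 where "b2 = b(k := (0, snd (b k)))"
    have "mag_eval dmul b t = mag_eval dmul b1 t + mag_eval dmul b2 t" if "(c, t) \<in> set \<Phi>" for c t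
      using mag_eval_update_add[OF bilinear_dmul module_dscale
          count_leaves_polylinear[OF polylinear_identity[OF S] that True], of b "(fst (b k), 0)" "(0, snd (b k))"]
      by (simp add: b1_def b2_def)
    then have "lin_comb 0 (+) dscale (mag_eval dmul b) \<Phi>
        = lin_comb 0 (+) dscale (\<lambda>t. mag_eval dmul b1 t + mag_eval dmul b2 t) \<Phi>"
      by (rule lin_comb_cong)
    also have "\<dots> = lin_comb 0 (+) dscale (mag_eval dmul b1) \<Phi> + lin_comb 0 (+) dscale (mag_eval dmul b2) \<Phi>"
      by (rule lin_comb_add[OF module_dscale])
    finally have split: "snd (lin_comb 0 (+) dscale (mag_eval dmul b) \<Phi>)
        = snd (lin_comb 0 (+) dscale (mag_eval dmul b1) \<Phi>) + snd (lin_comb 0 (+) dscale (mag_eval dmul b2) \<Phi>)"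
      by simp
    have "\<forall>i\<in>{1..n} - K. fst (b1 i) = 0 \<or> snd (b1 i) = 0"
      "\<forall>i\<in>{1..n} - K. fst (b2 i) = 0 \<or> snd (b2 i) = 0"
      using insert.prems by (auto simp: b1_def b2_def)
    then show ?thesis unfolding split by (simp add: insert.IH)
  qed
qed

lemma Var_algebra_doubled: "Var_algebra S dscale dmul"
  unfolding Var_algebra_def
proof (intro conjI module_dscale bilinear_dmul ballI allI, clarify)
  fix n \<Phi> and b :: "nat \<Rightarrow> 'a \<times> 'a" assume S: "(n, \<Phi>) \<in> S"
  have "fst \<circ> mag_eval dmul b = mag_eval p (fst \<circ> b)"
    by (rule ext) (simp add: mag_eval_map[where h = fst] dmul_def)
  then have "fst (lin_comb 0 (+) dscale (mag_eval dmul b) \<Phi>) = 0"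
    by (simp add: fst_lin_comb_dscale perp_identity[OF S])
  moreover have "snd (lin_comb 0 (+) dscale (mag_eval dmul b) \<Phi>) = 0"
    using snd_identity_split[of "{1..n}", OF _ S] by simp
  ultimately show "lin_comb 0 (+) dscale (mag_eval dmul b) \<Phi> = 0"
    by (simp add: prod_eq_iff)
qed

section \<open>The homomorphism \<open>\<chi>\<close>\<close>

definition dval :: "('x \<Rightarrow> 'a) \<Rightarrow> 'x + 'x \<Rightarrow> 'a \<times> 'a" where
  "dval \<alpha> v = (case v of Inl x \<Rightarrow> (\<alpha> x, 0) | Inr x \<Rightarrow> (0, \<alpha> x))"

definition pval :: "('x \<Rightarrow> 'a) \<Rightarrow> 'x + 'x \<Rightarrow> 'a" where
  "pval \<alpha> v = \<alpha> (case v of Inl x \<Rightarrow> x | Inr x \<Rightarrow> x)"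

abbreviation deval :: "('x \<Rightarrow> 'a) \<Rightarrow> ('x + 'x, 'k) tm \<Rightarrow> 'a \<times> 'a" where
  "deval \<alpha> \<equiv> tm_eval dscale dmul (dval \<alpha>)"

abbreviation peval :: "('x \<Rightarrow> 'a) \<Rightarrow> ('x + 'x, 'k) tm \<Rightarrow> 'a" where
  "peval \<alpha> \<equiv> tm_eval scale p (pval \<alpha>)"

lemma deval_phiT: "deval \<alpha> (phiT t) = (peval \<alpha> t, 0)"
  by (induction t) (simp_all add: dval_def pval_def zero_prod_def split: sum.split)

lemma peval_phiT: "peval \<alpha> (phiT t) = peval \<alpha> t"
  by (induction t) (simp_all add: pval_def split: sum.split)

lemma deval_fcong: "fcong S s t \<Longrightarrow> deval \<alpha> s = deval \<alpha> t"
  by (rule tm_eval_fcong[OF Var_algebra_doubled])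

lemma peval_fcong: "fcong S s t \<Longrightarrow> peval \<alpha> s = peval \<alpha> t"
  by (rule tm_eval_fcong[OF Var_algebra_perp])

definition V_invariant :: "('x \<Rightarrow> 'a) \<Rightarrow> ('x + 'x, 'k) tm \<Rightarrow> bool" where
  "V_invariant \<alpha> t \<longleftrightarrow> fst (deval \<alpha> t) = 0 \<and> ctx_equiv (peval \<alpha> t) (snd (deval \<alpha> t))"

lemma V_invariant_rep_cls: "V_invariant \<alpha> t \<Longrightarrow> V_invariant \<alpha> (rep (cls S t))"
  unfolding V_invariant_def using deval_fcong peval_fcong fcong_rep_cls by metis

lemma V_invariant_mul:
  assumes u: "V_invariant \<alpha> u" and w: "V_invariant \<alpha> w"
  shows "V_invariant \<alpha> (TMul u (phiT w))" "V_invariant \<alpha> (TMul (phiT u) w)"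
    "V_invariant \<alpha> (TMul u w)"
proof -
  obtain su sw where du: "deval \<alpha> u = (0, su)" and dw: "deval \<alpha> w = (0, sw)"
    and cu: "ctx_equiv (peval \<alpha> u) su" and cw: "ctx_equiv (peval \<alpha> w) sw"
    using u w unfolding V_invariant_def by (metis prod.collapse)
  show "V_invariant \<alpha> (TMul u (phiT w))" "V_invariant \<alpha> (TMul (phiT u) w)"
    "V_invariant \<alpha> (TMul u w)"
    unfolding V_invariant_def using cu cw
    by (simp_all add: du dw deval_phiT peval_phiT ctx_equiv_tri_op)
qed

lemma V_invariant_Vset: "U \<in> Vset S X \<Longrightarrow> V_invariant \<alpha> (rep U)"
proof (induction rule: Vset.induct)
  case (gen x)
  have "V_invariant \<alpha> (TV (Inr x))" by (simp add: V_invariant_def dval_def pval_def)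
  then show ?case unfolding dotF_def by (rule V_invariant_rep_cls)
next
  case zero
  have "V_invariant \<alpha> TZ" by (simp add: V_invariant_def)
  then show ?case unfolding zeroF_def by (rule V_invariant_rep_cls)
next
  case (add U W)
  then have "V_invariant \<alpha> (TAdd (rep U) (rep W))" by (simp add: V_invariant_def ctx_equiv_add)
  then show ?case unfolding addF_def by (rule V_invariant_rep_cls)
next
  case (smul U c)
  then have "V_invariant \<alpha> (TSm c (rep U))" by (simp add: V_invariant_def dscale_def ctx_equiv_scale)
  then show ?case unfolding smulF_def by (rule V_invariant_rep_cls)
next
  case (dashv U W)
  then show ?case unfolding Vset_tri_ops_cls(1)[OF dashv.hyps]
    by (intro V_invariant_rep_cls V_invariant_mul(1))
next
  case (vdash U W)
  then show ?case unfolding Vset_tri_ops_cls(2)[OF vdash.hyps]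
    by (intro V_invariant_rep_cls V_invariant_mul(2))
next
  case (perp U W)
  then show ?case unfolding Vset_tri_ops_cls(3)[OF perp.hyps]
    by (intro V_invariant_rep_cls V_invariant_mul(3))
qed

definition chi :: "('x \<Rightarrow> 'a) \<Rightarrow> ('x + 'x, 'k) tm set \<Rightarrow> 'a" where
  "chi \<alpha> U = snd (deval \<alpha> (rep U))"

lemma chi_cls: "chi \<alpha> (cls S t) = snd (deval \<alpha> t)"
  unfolding chi_def using deval_fcong fcong_rep_cls by metis

lemma deval_rep_Vset:
  assumes "U \<in> Vset S X"
  shows "deval \<alpha> (rep U) = (0, chi \<alpha> U)" "ctx_equiv (peval \<alpha> (rep U)) (chi \<alpha> U)"
  using V_invariant_Vset[OF assms, of \<alpha>] by (simp_all add: V_invariant_def chi_def prod_eq_iff)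

lemma chi_dotF: "chi \<alpha> (dotF S x) = \<alpha> x"
  by (simp add: dotF_def chi_cls dval_def)

lemma tri_hom_V_chi: "tri_hom_V S X scale l r p (chi \<alpha>)"
  unfolding tri_hom_V_def
proof (intro conjI ballI allI)
  fix U W assume U: "U \<in> Vset S X" and W: "W \<in> Vset S X"
  note dU = deval_rep_Vset(1)[OF U] and cU = deval_rep_Vset(2)[OF U]
  note dW = deval_rep_Vset(1)[OF W] and cW = deval_rep_Vset(2)[OF W]
  show "chi \<alpha> (addF S U W) = chi \<alpha> U + chi \<alpha> W"
    by (simp add: addF_def chi_cls dU dW)
  show "chi \<alpha> (dashvF S U W) = l (chi \<alpha> U) (chi \<alpha> W)"
    using cW by (simp add: Vset_tri_ops_cls[OF U W] chi_cls dU deval_phiT ctx_equiv_def)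
  show "chi \<alpha> (vdashF S U W) = r (chi \<alpha> U) (chi \<alpha> W)"
    using cU by (simp add: Vset_tri_ops_cls[OF U W] chi_cls dW deval_phiT ctx_equiv_def)
  show "chi \<alpha> (perpF S U W) = p (chi \<alpha> U) (chi \<alpha> W)"
    by (simp add: Vset_tri_ops_cls[OF U W] chi_cls dU dW)
next
  fix c U assume "U \<in> Vset S X"
  then show "chi \<alpha> (smulF S c U) = scale c (chi \<alpha> U)"
    by (simp add: smulF_def chi_cls deval_rep_Vset(1))
qed

end

theorem theorem3p3:
  fixes S :: "(nat \<times> ('k::field, nat) mpoly) set"
    and X :: "'x set"
    and scale :: "'k \<Rightarrow> 'a::ab_group_add \<Rightarrow> 'a"
    and l r p :: "'a \<Rightarrow> 'a \<Rightarrow> 'a"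
    and \<alpha> :: "'x \<Rightarrow> 'a"
  assumes "\<forall>(n, \<Phi>) \<in> S. polylinear n \<Phi>"
    and "tri_Var_algebra S scale l r p"
  shows "tri_ids S (Vset S X) (zeroF S) (addF S) (smulF S) (dashvF S) (vdashF S) (perpF S) \<and>
         (\<exists>\<chi>. tri_hom_V S X scale l r p \<chi> \<and> (\<forall>x\<in>X. \<chi> (dotF S x) = \<alpha> x) \<and>
              (\<forall>\<chi>'. tri_hom_V S X scale l r p \<chi>' \<and> (\<forall>x\<in>X. \<chi>' (dotF S x) = \<alpha> x)
                     \<longrightarrow> (\<forall>U\<in>Vset S X. \<chi>' U = \<chi> U)))"
proof -
  interpret tri_Var_target S scale l r p
    using assms by unfold_locales
  have hom: "tri_hom_V S X scale l r p (chi \<alpha>)" and gen: "\<forall>x\<in>X. chi \<alpha> (dotF S x) = \<alpha> x"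
    by (simp_all add: tri_hom_V_chi chi_dotF)
  have "\<chi>' U = chi \<alpha> U"
    if "tri_hom_V S X scale l r p \<chi>'" "\<forall>x\<in>X. \<chi>' (dotF S x) = \<alpha> x" "U \<in> Vset S X" for \<chi>' U
    using tri_hom_V_unique[OF that(1) hom _ that(3)] that(2) gen by simp
  with V_tri_identities[OF assms(1)] hom gen show ?thesis by blast
qed

end
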